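(* Let $d$ be a positive integer and $q$ a prime power with $(d,q)\notin\{(1,2),(1,3),(2,2)\}$. Then every element of $\operatorname{GL}_d(q)$ is a product of two fixed-point-free elements of $\operatorname{GL}_d(q)$, where $A\in\operatorname{GL}_d(q)$ is called fixed-point-free if the only vector $v\in\mathbb{F}_q^d$ with $vA=v$ is $v=0$ (equivalently, $A$ is a derangement in the natural action of $\operatorname{GL}_d(q)$ on $\mathbb{F}_q^d\setminus\{0\}$).
   Context: $\operatorname{GL}_d(q)$ is the group of invertible $(d\times d)$-matrices over $\mathbb{F}_q$, acting on row vectors by right multiplication. *)

theory Defs
  imports "HOL-Analysis.Analysis"
begin

definition fixed_point_free :: "('a::field) ^'n^'n \<Rightarrow> bool" where
  "fixed_point_free A \<longleftrightarrow> (\<forall>v :: 'a^'n. v v* A = v \<longrightarrow> v = 0)"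

end

theory Submission
  imports Defs "Jordan_Normal_Form.Determinant" "Jordan_Normal_Form.Column_Operations"
    "HOL-Number_Theory.Residues"
begin

(* Writing A = B (inv B * A), it suffices to find B with B, B - 1 and A - B invertible. Taking B
   block lower triangular, a Schur complement argument reduces this to the same problem for the
   trailing diagonal block H of A and for some perturbation G - R W of its leading block G. Over
   a field with at least four elements every 1 by 1 block is solvable, which gives the result by
   induction. Over F_3 only the 1 by 1 block -1 fails, and over F_2 all 1 by 1 blocks and some
   2 by 2 blocks fail; there a similarity (permutations and one elementary shear) first brings a
   suitable entry into position, the freedom in W is used, and the base cases (all 2 by 2 matrices
   and -1 of size 3 over F_3, all 3 by 3 matrices and a 2 by 2 criterion over F_2) are settled by
   explicit witnesses whose determinants are computed over the integers. *)

section \<open>Decomposable matrices\<close>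

text \<open>The induction passes to diagonal blocks, so the notion is needed for singular A as well.\<close>

definition fpf_decomposable :: "nat \<Rightarrow> 'a::field mat \<Rightarrow> bool" where
  "fpf_decomposable n A \<longleftrightarrow>
     (\<exists>B \<in> carrier_mat n n. det B \<noteq> 0 \<and> det (B - 1\<^sub>m n) \<noteq> 0 \<and> det (A - B) \<noteq> 0)"

lemma fpf_decomposableI:
  "B \<in> carrier_mat n n \<Longrightarrow> det B \<noteq> 0 \<Longrightarrow> det (B - 1\<^sub>m n) \<noteq> 0 \<Longrightarrow> det (A - B) \<noteq> 0
    \<Longrightarrow> fpf_decomposable n A"
  unfolding fpf_decomposable_def by blast

lemma fpf_decomposable_dim0: "fpf_decomposable 0 A"
proof -
  have "det (A - 1\<^sub>m 0) = 1" by (rule det_dim_zero) (rule minus_carrier_mat, simp)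
  moreover have "det (1\<^sub>m 0 - 1\<^sub>m 0 :: 'a mat) = 1" by (rule det_dim_zero) (rule minus_carrier_mat, simp)
  ultimately show ?thesis by (intro fpf_decomposableI[of "1\<^sub>m 0"]) auto
qed

lemma fpf_decomposable_similar:
  assumes "similar_mat A A'" and "A' \<in> carrier_mat n n" and "fpf_decomposable n A'"
  shows "fpf_decomposable n A"
proof -
  obtain n' P Q where carr: "{A, A', P, Q} \<subseteq> carrier_mat n' n'"
    and PQ: "P * Q = 1\<^sub>m n'" "Q * P = 1\<^sub>m n'" and A: "A = P * A' * Q"
    using similar_matD[OF assms(1)] by blast
  have "n' = n" using carr assms(2) by auto
  then have P: "P \<in> carrier_mat n n" and Q: "Q \<in> carrier_mat n n"
    and PQ: "P * Q = 1\<^sub>m n" "Q * P = 1\<^sub>m n"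
    using carr PQ by auto
  have det_conj: "det (P * X * Q) = det X" if "X \<in> carrier_mat n n" for X
    using that P Q PQ by (intro det_similar similar_matI[of "P * X * Q" X P Q n]) auto
  have conj_diff: "P * X * Q - P * Y * Q = P * (X - Y) * Q"
    if "X \<in> carrier_mat n n" "Y \<in> carrier_mat n n" for X Y
  proof -
    have "P * (X - Y) * Q = (P * X - P * Y) * Q"
      using that P by (simp add: mult_minus_distrib_mat)
    also have "\<dots> = P * X * Q - P * Y * Q"
      using that P Q by (intro minus_mult_distrib_mat) auto
    finally show ?thesis by simp
  qed
  have conj_one: "P * 1\<^sub>m n * Q = 1\<^sub>m n"
    using P PQ by simp
  obtain B where B: "B \<in> carrier_mat n n" "det B \<noteq> 0" "det (B - 1\<^sub>m n) \<noteq> 0" "det (A' - B) \<noteq> 0"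
    using assms(3) unfolding fpf_decomposable_def by blast
  show ?thesis
  proof (rule fpf_decomposableI[of "P * B * Q"])
    show "P * B * Q \<in> carrier_mat n n" using P B(1) Q by auto
    show "det (P * B * Q) \<noteq> 0" using B by (simp add: det_conj)
    have "P * B * Q - 1\<^sub>m n = P * B * Q - P * 1\<^sub>m n * Q" by (simp only: conj_one)
    also have "\<dots> = P * (B - 1\<^sub>m n) * Q" using B(1) by (intro conj_diff) auto
    finally have "P * B * Q - 1\<^sub>m n = P * (B - 1\<^sub>m n) * Q" .
    then show "det (P * B * Q - 1\<^sub>m n) \<noteq> 0"
      using B det_conj[of "B - 1\<^sub>m n"] by (simp add: minus_carrier_mat)
    have "A - P * B * Q = P * (A' - B) * Q"
      unfolding A using assms(2) B(1) by (rule conj_diff)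
    then show "det (A - P * B * Q) \<noteq> 0"
      using B det_conj[of "A' - B"] by (simp add: minus_carrier_mat)
  qed
qed

lemma fpf_decomposable_transpose:
  assumes "A \<in> carrier_mat n n" and "fpf_decomposable n A"
  shows "fpf_decomposable n (transpose_mat A)"
proof -
  obtain B where B: "B \<in> carrier_mat n n" "det B \<noteq> 0" "det (B - 1\<^sub>m n) \<noteq> 0" "det (A - B) \<noteq> 0"
    using assms(2) unfolding fpf_decomposable_def by blast
  have B1: "B - 1\<^sub>m n \<in> carrier_mat n n" and AB: "A - B \<in> carrier_mat n n"
    using B(1) by (auto intro: minus_carrier_mat)
  have "det (transpose_mat B - 1\<^sub>m n) = det (B - 1\<^sub>m n)"
    using B(1) transpose_minus[of B n n "1\<^sub>m n"] det_transpose[OF B1] by simp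
  moreover have "det (transpose_mat A - transpose_mat B) = det (A - B)"
    using assms(1) B(1) transpose_minus[of A n n B] det_transpose[OF AB] by simp
  ultimately show ?thesis
    using B by (intro fpf_decomposableI[of "transpose_mat B"]) (simp_all add: det_transpose)
qed

lemma four_block_mat_split:
  assumes "A \<in> carrier_mat (k + m) (k + m)"
  shows "A = four_block_mat (mat k k (\<lambda>(i,j). A $$ (i,j))) (mat k m (\<lambda>(i,j). A $$ (i, k + j)))
    (mat m k (\<lambda>(i,j). A $$ (k + i, j))) (mat m m (\<lambda>(i,j). A $$ (k + i, k + j)))"
  using assms by (intro eq_matI) auto

lemma mult_mat_single_row:
  assumes "R \<in> carrier_mat k m" and "j < m"
  shows "R * mat m l (\<lambda>(i,c). if i = j then w c else 0) = mat k l (\<lambda>(i,c). R $$ (i,j) * w c)"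
proof (rule eq_matI)
  fix i c assume "i < dim_row (mat k l (\<lambda>(i,c). R $$ (i,j) * w c))"
    and "c < dim_col (mat k l (\<lambda>(i,c). R $$ (i,j) * w c))"
  then have "(R * mat m l (\<lambda>(i,c). if i = j then w c else 0)) $$ (i,c)
      = (\<Sum>r<m. R $$ (i,r) * (if r = j then w c else 0))"
    using assms(1) by (simp add: scalar_prod_def lessThan_atLeast0)
  also have "\<dots> = R $$ (i,j) * w c"
    using assms(2) by (simp add: if_distrib cong: if_cong)
  finally show "(R * mat m l (\<lambda>(i,c). if i = j then w c else 0)) $$ (i,c)
      = mat k l (\<lambda>(i,c). R $$ (i,j) * w c) $$ (i,c)"
    using \<open>i < _\<close> \<open>c < _\<close> by simp
qed (use assms in auto)

lemma mult_four_block_mat_column_elim: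
  fixes G :: "'a::comm_ring_1 mat"
  assumes G: "G \<in> carrier_mat k k" and R: "R \<in> carrier_mat k m"
    and K: "K \<in> carrier_mat m m" and W: "W \<in> carrier_mat m k"
  shows "four_block_mat G R (K * W) K * four_block_mat (1\<^sub>m k) (0\<^sub>m k m) (- W) (1\<^sub>m m)
    = four_block_mat (G - R * W) R (0\<^sub>m m k) K"
proof -
  have KW: "K * W \<in> carrier_mat m k" and RW: "R * W \<in> carrier_mat k k" using K R W by simp_all
  have "four_block_mat G R (K * W) K * four_block_mat (1\<^sub>m k) (0\<^sub>m k m) (- W) (1\<^sub>m m)
      = four_block_mat (G * 1\<^sub>m k + R * - W) (G * 0\<^sub>m k m + R * 1\<^sub>m m)
          (K * W * 1\<^sub>m k + K * - W) (K * W * 0\<^sub>m k m + K * 1\<^sub>m m)"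
    using G R K KW W by (intro mult_four_block_mat) auto
  also have "\<dots> = four_block_mat (G - R * W) R (0\<^sub>m m k) K"
  proof (rule cong_four_block_mat)
    show "G * 1\<^sub>m k + R * - W = G - R * W"
      using G R W RW by (simp add: minus_add_uminus_mat[OF G RW])
    show "G * 0\<^sub>m k m + R * 1\<^sub>m m = R" using G R by simp
    show "K * W * 1\<^sub>m k + K * - W = 0\<^sub>m m k"
      using K W KW by (simp add: minus_add_uminus_mat[OF KW KW, symmetric])
    show "K * W * 0\<^sub>m k m + K * 1\<^sub>m m = K" using K KW by (simp add: right_mult_zero_mat)
  qed
  finally show ?thesis .
qed

text \<open>B is block lower triangular with diagonal blocks X and X', and its lower left block is chosen
  so that the column operation E makes A - B block upper triangular.\<close>

lemma fpf_decomposable_four_block: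
  assumes G: "G \<in> carrier_mat k k" and R: "R \<in> carrier_mat k m"
    and S: "S \<in> carrier_mat m k" and H: "H \<in> carrier_mat m m" and W: "W \<in> carrier_mat m k"
    and GRW: "fpf_decomposable k (G - R * W)" and H_dec: "fpf_decomposable m H"
  shows "fpf_decomposable (k + m) (four_block_mat G R S H)"
proof -
  obtain X where X: "X \<in> carrier_mat k k" "det X \<noteq> 0" "det (X - 1\<^sub>m k) \<noteq> 0"
    "det (G - R * W - X) \<noteq> 0"
    using GRW unfolding fpf_decomposable_def by blast
  obtain X' where X': "X' \<in> carrier_mat m m" "det X' \<noteq> 0" "det (X' - 1\<^sub>m m) \<noteq> 0"
    "det (H - X') \<noteq> 0"
    using H_dec unfolding fpf_decomposable_def by blast
  define K where "K = H - X'"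
  define B where "B = four_block_mat X (0\<^sub>m k m) (S - K * W) X'"
  define E where "E = four_block_mat (1\<^sub>m k) (0\<^sub>m k m) (- W) (1\<^sub>m m)"
  have K: "K \<in> carrier_mat m m" unfolding K_def using X'(1) by (rule minus_carrier_mat)
  have Y: "S - K * W \<in> carrier_mat m k" using K W by (intro minus_carrier_mat) simp
  have B: "B \<in> carrier_mat (k + m) (k + m)" using X(1) X'(1) Y by (simp add: B_def)
  have det_B: "det B = det X * det X'"
    unfolding B_def by (rule det_four_block_mat_upper_right_zero[OF X(1) refl Y X'(1)])
  have "B - 1\<^sub>m (k + m) = four_block_mat (X - 1\<^sub>m k) (0\<^sub>m k m) (S - K * W) (X' - 1\<^sub>m m)"
    unfolding B_def using X(1) X'(1) Y by (intro eq_matI) auto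
  then have det_B1: "det (B - 1\<^sub>m (k + m)) = det (X - 1\<^sub>m k) * det (X' - 1\<^sub>m m)"
    using det_four_block_mat_upper_right_zero[OF _ refl Y, of "X - 1\<^sub>m k" "X' - 1\<^sub>m m"]
    by (simp add: minus_carrier_mat)
  have "four_block_mat G R S H - B = four_block_mat (G - X) R (K * W) K"
    unfolding B_def K_def using G R S H X(1) X'(1) W by (intro eq_matI) auto
  moreover have "G - X - R * W = G - R * W - X" using G R W X(1) by (intro eq_matI) auto
  ultimately have "(four_block_mat G R S H - B) * E = four_block_mat (G - R * W - X) R (0\<^sub>m m k) K"
    using mult_four_block_mat_column_elim[OF minus_carrier_mat[OF X(1)] R K W] by (simp add: E_def)
  then have "det ((four_block_mat G R S H - B) * E) = det (G - R * W - X) * det K"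
    using det_four_block_mat_lower_left_zero[OF minus_carrier_mat[OF X(1)] R refl K] by simp
  moreover have "det E = 1"
    unfolding E_def
    using det_four_block_mat_upper_right_zero[OF one_carrier_mat refl uminus_carrier_mat[OF W]
        one_carrier_mat] by simp
  moreover have "four_block_mat G R S H - B \<in> carrier_mat (k + m) (k + m)" using B by auto
  ultimately have "det (four_block_mat G R S H - B) \<noteq> 0"
    using X(4) X'(4) W by (simp add: det_mult[of _ "k + m"] E_def K_def)
  then show ?thesis
    using B X X' det_B det_B1 by (intro fpf_decomposableI[OF B]) auto
qed

lemma fpf_decomposable_four_block_diag:
  assumes "G \<in> carrier_mat k k" and "R \<in> carrier_mat k m" and "S \<in> carrier_mat m k"
    and "H \<in> carrier_mat m m" and "fpf_decomposable k G" and "fpf_decomposable m H"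
  shows "fpf_decomposable (k + m) (four_block_mat G R S H)"
proof -
  have "G - R * 0\<^sub>m m k = G" using assms(1,2) by (intro eq_matI) auto
  then show ?thesis using assms by (intro fpf_decomposable_four_block[of _ _ _ _ _ _ "0\<^sub>m m k"]) auto
qed

section \<open>Fields with at least three elements\<close>

lemma fpf_decomposable_dim1:
  assumes "C \<in> carrier_mat 1 1" and "x \<noteq> 0" and "x \<noteq> 1" and "x \<noteq> C $$ (0,0)"
  shows "fpf_decomposable 1 C"
proof (rule fpf_decomposableI[of "mat 1 1 (\<lambda>_. x)"])
  show "det (mat 1 1 (\<lambda>_. x)) \<noteq> 0" using assms(2) by (simp add: det_single)
  have "mat 1 1 (\<lambda>_. x) - 1\<^sub>m 1 = mat 1 1 (\<lambda>_. x - 1)" by (intro eq_matI) auto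
  then show "det (mat 1 1 (\<lambda>_. x) - 1\<^sub>m 1) \<noteq> 0" using assms(3) by (simp add: det_single)
  have "C - mat 1 1 (\<lambda>_. x) = mat 1 1 (\<lambda>_. C $$ (0,0) - x)" using assms(1) by (intro eq_matI) auto
  then show "det (C - mat 1 1 (\<lambda>_. x)) \<noteq> 0" using assms(4) by (simp add: det_single)
qed simp

text \<open>If the first row has a nonzero off-diagonal entry, the Schur complement G - R W can be
  made 0 by choice of W.\<close>

lemma fpf_decomposable_first_row:
  assumes A: "A \<in> carrier_mat (Suc m) (Suc m)" and x: "x \<noteq> 0" "x \<noteq> 1"
    and H: "fpf_decomposable m (mat m m (\<lambda>(i,j). A $$ (Suc i, Suc j)))"
    and row: "A $$ (0,0) \<noteq> x \<or> (\<exists>j<m. A $$ (0, Suc j) \<noteq> 0)"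
  shows "fpf_decomposable (Suc m) A"
proof -
  let ?G = "mat 1 1 (\<lambda>(i,j). A $$ (i,j))" and ?R = "mat 1 m (\<lambda>(i,j). A $$ (i, 1 + j))"
  have split: "A = four_block_mat ?G ?R (mat m 1 (\<lambda>(i,j). A $$ (1 + i, j)))
      (mat m m (\<lambda>(i,j). A $$ (Suc i, Suc j)))"
    using four_block_mat_split[of A 1 m] A by simp
  have R: "?R \<in> carrier_mat 1 m" by simp
  obtain W where W: "W \<in> carrier_mat m 1" and GRW: "fpf_decomposable 1 (?G - ?R * W)"
  proof (cases "A $$ (0,0) \<noteq> x")
    case True
    have "?G - ?R * 0\<^sub>m m 1 \<in> carrier_mat 1 1" by (intro minus_carrier_mat) simp
    then have "fpf_decomposable 1 (?G - ?R * 0\<^sub>m m 1)"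
      using True x by (intro fpf_decomposable_dim1) auto
    then show ?thesis by (rule that[OF zero_carrier_mat])
  next
    case False
    then obtain j where j: "j < m" "A $$ (0, Suc j) \<noteq> 0" using row by blast
    let ?W = "mat m 1 (\<lambda>(i,c). if i = j then (\<lambda>_. A $$ (0,0) / A $$ (0, Suc j)) c else 0)"
    have "?R * ?W = mat 1 1 (\<lambda>(i,c). ?R $$ (i,j) * (A $$ (0,0) / A $$ (0, Suc j)))"
      by (rule mult_mat_single_row[OF R j(1)])
    then have "?G - ?R * ?W = 0\<^sub>m 1 1" using j by (intro eq_matI) auto
    then have "fpf_decomposable 1 (?G - ?R * ?W)"
      using x by (intro fpf_decomposable_dim1) auto
    then show ?thesis by (rule that[rotated]) simp
  qed
  have "fpf_decomposable (1 + m) (four_block_mat ?G ?R (mat m 1 (\<lambda>(i,j). A $$ (1 + i, j)))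
      (mat m m (\<lambda>(i,j). A $$ (Suc i, Suc j))))"
    by (rule fpf_decomposable_four_block[OF _ R _ _ W GRW H]) auto
  then show ?thesis using split by simp
qed

lemma fpf_decomposable_row:
  fixes A :: "'a::field mat"
  assumes A: "A \<in> carrier_mat (Suc m) (Suc m)" and i: "i \<le> m" and x: "x \<noteq> 0" "x \<noteq> 1"
    and smaller: "\<And>H :: 'a mat. H \<in> carrier_mat m m \<Longrightarrow> fpf_decomposable m H"
    and row: "A $$ (i,i) \<noteq> x \<or> (\<exists>j\<le>m. j \<noteq> i \<and> A $$ (i,j) \<noteq> 0)"
  shows "fpf_decomposable (Suc m) A"
proof -
  let ?A = "swap_cols_rows 0 i A"
  have A': "?A \<in> carrier_mat (Suc m) (Suc m)" using A by simp
  have entry: "?A $$ (0, j) = A $$ (i, if j = i then 0 else if j = 0 then i else j)" if "j \<le> m" for j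
    using A i that by simp
  have "?A $$ (0,0) \<noteq> x \<or> (\<exists>j<m. ?A $$ (0, Suc j) \<noteq> 0)"
    using row
  proof (elim disjE exE conjE)
    assume "A $$ (i,i) \<noteq> x"
    then show ?thesis using entry[of 0] by auto
  next
    fix j assume j: "j \<le> m" "j \<noteq> i" "A $$ (i,j) \<noteq> 0"
    define j' where "j' = (if j = 0 then i else j)"
    have "j' \<noteq> 0" and "j' \<le> m" and "?A $$ (0, j') \<noteq> 0"
      using i j entry[of j'] by (auto simp: j'_def)
    then have "?A $$ (0, Suc (j' - 1)) \<noteq> 0" and "j' - 1 < m" by simp_all
    then show ?thesis by blast
  qed
  moreover have "fpf_decomposable m (mat m m (\<lambda>(a,b). ?A $$ (Suc a, Suc b)))"
    by (rule smaller) simp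
  ultimately have dec: "fpf_decomposable (Suc m) ?A"
    using A' x by (intro fpf_decomposable_first_row) simp_all
  have "similar_mat A ?A"
    using i by (intro swap_cols_rows_similar[OF A, THEN similar_mat_sym]) auto
  then show ?thesis using A' dec by (rule fpf_decomposable_similar)
qed

lemma fpf_decomposable_card_ge4:
  assumes "4 \<le> CARD('a::{field,finite})" and "(A :: 'a mat) \<in> carrier_mat n n"
  shows "fpf_decomposable n A"
  using assms(2)
proof (induction n arbitrary: A)
  case 0
  show ?case by (rule fpf_decomposable_dim0)
next
  case (Suc m)
  obtain x :: 'a where "x \<notin> {0, 1, A $$ (0,0)}"
  proof -
    have "card {0, 1, A $$ (0,0)} < CARD('a)"
      using assms(1) card_length[of "[0, 1, A $$ (0,0)]"] by simp
    then have "{0, 1, A $$ (0,0)} \<noteq> (UNIV :: 'a set)" by auto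
    then show ?thesis using that by blast
  qed
  moreover have "fpf_decomposable m (mat m m (\<lambda>(i,j). A $$ (Suc i, Suc j)))"
    by (rule Suc.IH) simp
  ultimately show ?case
    by (intro fpf_decomposable_first_row[OF Suc.prems, of x]) auto
qed

section \<open>Certificates over fields of prime order\<close>

text \<open>Over a field of prime order p every matrix is the image of an integer matrix with entries
  in 0..p-1, and its determinant vanishes iff the integer determinant is divisible by p. Finitely
  many cases are thus decided by simplification on integer lists; they are stated with list_all
  and list_ex rather than bounded quantifiers over sets, so that the simplifier enumerates them.\<close>

fun det_list :: "'a::comm_ring_1 list list \<Rightarrow> 'a" where
  "det_list [] = 1"
| "det_list (r # rs) =
     (\<Sum>j\<leftarrow>[0..<length r]. (-1) ^ j * r ! j * det_list (map (\<lambda>s. take j s @ drop (Suc j) s) rs))"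

definition square_list :: "nat \<Rightarrow> 'a list list \<Rightarrow> bool" where
  "square_list n xss \<longleftrightarrow> length xss = n \<and> (\<forall>xs \<in> set xss. length xs = n)"

lemma det_mat_of_rows_list:
  "square_list n xss \<Longrightarrow> det (mat_of_rows_list n xss) = det_list xss"
proof (induction xss arbitrary: n rule: det_list.induct)
  case 1
  then show ?case by (simp add: square_list_def mat_of_rows_list_def)
next
  case (2 r rs)
  let ?A = "mat_of_rows_list n (r # rs)"
  let ?del = "\<lambda>j s. take j s @ drop (Suc j) s"
  have len: "length rs + 1 = n" "length r = n" "\<forall>s \<in> set rs. length s = n"
    using "2.prems" by (simp_all add: square_list_def)
  obtain m where n: "n = Suc m" using len(1) by auto
  have A: "?A \<in> carrier_mat n n" using len(1) by (simp add: mat_of_rows_list_def)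
  have minor: "det (mat_delete ?A 0 j) = det_list (map (?del j) rs)" if j: "j < n" for j
  proof -
    have "mat_delete ?A 0 j = mat_of_rows_list m (map (?del j) rs)"
      using len j n by (intro eq_matI) (auto simp: mat_delete_def mat_of_rows_list_def nth_append)
    moreover have "det (mat_of_rows_list m (map (?del j) rs)) = det_list (map (?del j) rs)"
      using len j n by (intro "2.IH") (auto simp: square_list_def)
    ultimately show ?thesis by simp
  qed
  have entry: "?A $$ (0, j) = r ! j" if "j < n" for j
    using that len(1) by (simp add: mat_of_rows_list_def)
  have "det ?A = (\<Sum>j<n. ?A $$ (0,j) * cofactor ?A 0 j)"
    using laplace_expansion_row[OF A] n by blast
  also have "\<dots> = (\<Sum>j<n. (-1) ^ j * r ! j * det_list (map (?del j) rs))"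
    by (intro sum.cong) (simp_all add: cofactor_def minor entry)
  also have "\<dots> = det_list (r # rs)"
    using len(2) by (simp add: interv_sum_list_conv_sum_set_nat lessThan_atLeast0)
  finally show ?case .
qed

lemma det_list_2: "det_list [[a, b], [c, d]] = a * d - b * c"
  by (simp add: upt_rec)

lemma det_list_3: "det_list [[a, b, c], [d, e, f], [g, h, i]] =
    a * (e * i - f * h) - b * (d * i - f * g) + c * (d * h - e * g)"
  by (simp add: upt_rec algebra_simps)

definition id_list :: "nat \<Rightarrow> int list list" where
  "id_list n = map (\<lambda>i. map (\<lambda>j. of_bool (i = j)) [0..<n]) [0..<n]"

lemma square_list_n_lists: "xss \<in> set (List.n_lists n (List.n_lists n xs)) \<Longrightarrow> square_list n xss"
  by (auto simp: square_list_def set_n_lists)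

lemma square_list_id_list: "square_list n (id_list n)"
  by (simp add: square_list_def id_list_def)

lemma square_list_diff:
  "square_list n xss \<Longrightarrow> square_list n yss \<Longrightarrow> square_list n (map2 (map2 (-)) xss yss)"
  by (auto simp: square_list_def set_zip)

lemma of_int_mat_diff:
  assumes "square_list n xss" and "square_list n yss"
  shows "map_mat of_int (mat_of_rows_list n xss) - map_mat of_int (mat_of_rows_list n yss)
    = (map_mat of_int (mat_of_rows_list n (map2 (map2 (-)) xss yss)) :: 'a::ring_1 mat)"
  using assms by (intro eq_matI) (auto simp: square_list_def mat_of_rows_list_def)

lemma of_int_mat_id_list: "map_mat of_int (mat_of_rows_list n (id_list n)) = 1\<^sub>m n"
  by (intro eq_matI) (auto simp: mat_of_rows_list_def id_list_def)

lemma CHAR_eq_prime_card: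
  assumes "CARD('a::{field,finite}) = p" and "prime p"
  shows "CHAR('a) = p"
proof -
  have "CHAR('a) dvd p" using CHAR_dvd_CARD[where 'a='a] assms(1) by simp
  then show ?thesis using assms(2) by (auto simp: prime_nat_iff)
qed

lemma of_int_eq_0_iff_prime_card:
  assumes "CARD('a::{field,finite}) = p" and "prime p"
  shows "(of_int z :: 'a) = 0 \<longleftrightarrow> int p dvd z"
  using CHAR_eq_prime_card[OF assms] by (simp add: of_int_eq_0_iff_char_dvd)

lemma prime_card_of_int_surj:
  assumes "CARD('a::{field,finite}) = p" and "prime p"
  shows "\<exists>z \<in> {0..<int p}. (x :: 'a) = of_int z"
proof -
  have "inj_on (of_int :: int \<Rightarrow> 'a) {0..<int p}"
  proof (rule inj_onI)
    fix a b assume ab: "a \<in> {0..<int p}" "b \<in> {0..<int p}" "(of_int a :: 'a) = of_int b"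
    then have "int p dvd a - b" using of_int_eq_0_iff_prime_card[OF assms, of "a - b"] by simp
    then have "a mod int p = b mod int p" by (simp add: mod_eq_dvd_iff)
    then show "a = b" using ab by simp
  qed
  then have "card ((of_int :: int \<Rightarrow> 'a) ` {0..<int p}) = CARD('a)"
    using assms(1) by (simp add: card_image)
  then have "(of_int :: int \<Rightarrow> 'a) ` {0..<int p} = UNIV"
    by (simp add: card_eq_UNIV_imp_eq_UNIV)
  then show ?thesis by (metis UNIV_I imageE)
qed

lemma prime_card_mat_of_int:
  assumes "CARD('a::{field,finite}) = p" and "prime p" and "set xs = {0..<int p}"
    and "(A :: 'a mat) \<in> carrier_mat n n"
  obtains xss where "xss \<in> set (List.n_lists n (List.n_lists n xs))"
    and "A = map_mat of_int (mat_of_rows_list n xss)"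
proof -
  define z where "z i j = (SOME z. z \<in> {0..<int p} \<and> A $$ (i,j) = of_int z)" for i j
  have z: "z i j \<in> {0..<int p} \<and> A $$ (i,j) = of_int (z i j)" for i j
    unfolding z_def by (rule someI_ex) (use prime_card_of_int_surj[OF assms(1,2)] in blast)
  let ?xss = "map (\<lambda>i. map (z i) [0..<n]) [0..<n]"
  show ?thesis
  proof
    show "?xss \<in> set (List.n_lists n (List.n_lists n xs))"
      using z assms(3) by (auto simp: set_n_lists)
    show "A = map_mat of_int (mat_of_rows_list n ?xss)"
      using z assms(4) by (intro eq_matI) (auto simp: mat_of_rows_list_def)
  qed
qed

lemma fpf_decomposable_of_int_witness:
  assumes "CARD('a::{field,finite}) = p" and "prime p"
    and "square_list n xss" and "square_list n yss"
    and "\<not> int p dvd det_list yss" and "\<not> int p dvd det_list (map2 (map2 (-)) yss (id_list n))"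
    and "\<not> int p dvd det_list (map2 (map2 (-)) xss yss)"
  shows "fpf_decomposable n (map_mat of_int (mat_of_rows_list n xss) :: 'a mat)"
proof (rule fpf_decomposableI)
  let ?B = "map_mat of_int (mat_of_rows_list n yss) :: 'a mat"
  note of_int_0 = of_int_eq_0_iff_prime_card[OF assms(1,2)]
  show "?B \<in> carrier_mat n n"
    using assms(4) by (simp add: square_list_def mat_of_rows_list_def)
  show "det ?B \<noteq> 0"
    using assms(4,5) by (simp add: det_mat_of_rows_list of_int_0)
  show "det (?B - 1\<^sub>m n) \<noteq> 0"
    using assms(4,6) square_list_id_list[of n]
    by (simp add: of_int_mat_id_list[symmetric] of_int_mat_diff det_mat_of_rows_list square_list_diff of_int_0)
  show "det (map_mat of_int (mat_of_rows_list n xss) - ?B) \<noteq> 0"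
    using assms(3,4,7) by (simp add: of_int_mat_diff det_mat_of_rows_list square_list_diff of_int_0)
qed

lemma fpf_decomposable_of_int_cover:
  assumes "CARD('a::{field,finite}) = p" and "prime p"
    and "\<forall>yss \<in> set wits. square_list n yss \<and> \<not> int p dvd det_list yss
      \<and> \<not> int p dvd det_list (map2 (map2 (-)) yss (id_list n))"
    and "list_all (\<lambda>xss. list_ex (\<lambda>yss. \<not> int p dvd det_list (map2 (map2 (-)) xss yss)) wits) xsss"
    and "xss \<in> set xsss" and "square_list n xss"
  shows "fpf_decomposable n (map_mat of_int (mat_of_rows_list n xss) :: 'a mat)"
proof -
  obtain yss where "yss \<in> set wits" "\<not> int p dvd det_list (map2 (map2 (-)) xss yss)"
    using assms(4,5) by (auto simp: list_all_iff list_ex_iff)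
  then show ?thesis using assms by (intro fpf_decomposable_of_int_witness) auto
qed

lemma fpf_decomposable_prime_card_cover:
  assumes card: "CARD('a::{field,finite}) = p" and p: "prime p" and xs: "set xs = {0..<int p}"
    and A: "(A :: 'a mat) \<in> carrier_mat n n"
    and wits: "\<forall>yss \<in> set wits. square_list n yss \<and> \<not> int p dvd det_list yss
      \<and> \<not> int p dvd det_list (map2 (map2 (-)) yss (id_list n))"
    and cover: "list_all (\<lambda>xss. list_ex (\<lambda>yss. \<not> int p dvd det_list (map2 (map2 (-)) xss yss)) wits)
      (List.n_lists n (List.n_lists n xs))"
  shows "fpf_decomposable n A"
proof -
  obtain xss where xss: "xss \<in> set (List.n_lists n (List.n_lists n xs))"
    and "A = map_mat of_int (mat_of_rows_list n xss)"
    using prime_card_mat_of_int[OF card p xs A] by blast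
  then show ?thesis
    using fpf_decomposable_of_int_cover[OF card p wits cover xss] square_list_n_lists[OF xss] by simp
qed

section \<open>The field with three elements\<close>

lemma prime_three: "prime (3 :: nat)"
  by (simp add: prime_nat_iff' set_upt[symmetric])

lemma minus_one_neq_one_card3:
  assumes "CARD('a::{field,finite}) = 3"
  shows "(-1 :: 'a) \<noteq> 1"
proof -
  have "(of_int 2 :: 'a) \<noteq> 0"
    using of_int_eq_0_iff_prime_card[OF assms prime_three, of 2] by simp
  then show ?thesis by (metis eq_neg_iff_add_eq_0 of_int_numeral one_add_one)
qed

lemma fpf_decomposable_dim2_card3:
  assumes "CARD('a::{field,finite}) = 3" and "(A :: 'a mat) \<in> carrier_mat 2 2"
  shows "fpf_decomposable 2 A"
proof -
  let ?wits = "[[[0, 1], [1, 1]], [[0, -1], [-1, 1]], [[1, 1], [-1, 0]], [[1, -1], [1, 0 :: int]]]"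
  let ?all = "List.n_lists 2 (List.n_lists 2 [0, 1, 2 :: int])"
  have "\<forall>yss \<in> set ?wits. square_list 2 yss \<and> \<not> int 3 dvd det_list yss
      \<and> \<not> int 3 dvd det_list (map2 (map2 (-)) yss (id_list 2))"
    by (simp add: square_list_def id_list_def upt_rec det_list_2 del: det_list.simps)
  moreover have "list_all (\<lambda>xss. list_ex (\<lambda>yss. \<not> int 3 dvd det_list (map2 (map2 (-)) xss yss)) ?wits) ?all"
    apply (simp only: numeral_2_eq_2 n_lists.simps list.map concat.simps append.simps list.pred_inject)
    by (simp add: det_list_2 del: det_list.simps)
  moreover have "set [0, 1, 2] = {0..<int 3}" by auto
  ultimately show ?thesis
    using fpf_decomposable_prime_card_cover[OF assms(1) prime_three _ assms(2)] by blast
qed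

lemma fpf_decomposable_dim3_card3:
  assumes card: "CARD('a::{field,finite}) = 3" and A: "(A :: 'a mat) \<in> carrier_mat 3 3"
  shows "fpf_decomposable 3 A"
proof (cases "\<exists>i\<le>2. A $$ (i,i) \<noteq> -1 \<or> (\<exists>j\<le>2. j \<noteq> i \<and> A $$ (i,j) \<noteq> 0)")
  case True
  then obtain i where "i \<le> 2" "A $$ (i,i) \<noteq> -1 \<or> (\<exists>j\<le>2. j \<noteq> i \<and> A $$ (i,j) \<noteq> 0)"
    by blast
  then show ?thesis
    using A minus_one_neq_one_card3[OF card] fpf_decomposable_dim2_card3[OF card]
    by (intro fpf_decomposable_row[of A 2 i "-1", simplified]) auto
next
  case False
  then have diag: "A $$ (i,i) = -1" if "i \<le> 2" for i
    using that by auto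
  from False have off: "A $$ (i,j) = 0" if "i \<le> 2" "j \<le> 2" "j \<noteq> i" for i j
    using that by auto
  let ?I = "[[-1, 0, 0], [0, -1, 0], [0, 0, -1 :: int]]"
  let ?W = "[[0, 1, 0], [0, 0, 1], [1, 1, 0 :: int]]"
  have "A = map_mat of_int (mat_of_rows_list 3 ?I)"
  proof (rule eq_matI)
    fix i j assume "i < dim_row (map_mat of_int (mat_of_rows_list 3 ?I) :: 'a mat)"
      and "j < dim_col (map_mat of_int (mat_of_rows_list 3 ?I) :: 'a mat)"
    then have "i \<in> {0, 1, 2}" "j \<in> {0, 1, 2}" by (auto simp: mat_of_rows_list_def)
    then show "A $$ (i,j) = map_mat of_int (mat_of_rows_list 3 ?I) $$ (i,j)"
      using diag off by (auto simp: mat_of_rows_list_def)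
  qed (use A in \<open>simp_all add: mat_of_rows_list_def\<close>)
  moreover have "fpf_decomposable 3 (map_mat of_int (mat_of_rows_list 3 ?I) :: 'a mat)"
    by (rule fpf_decomposable_of_int_witness[OF card prime_three, where yss = ?W])
      (simp_all add: square_list_def id_list_def upt_rec det_list_3 del: det_list.simps)
  ultimately show ?thesis by simp
qed

theorem fpf_decomposable_card3:
  assumes card: "CARD('a::{field,finite}) = 3"
  shows "2 \<le> n \<Longrightarrow> (A :: 'a mat) \<in> carrier_mat n n \<Longrightarrow> fpf_decomposable n A"
proof (induction n arbitrary: A rule: less_induct)
  case (less n)
  consider "n = 2" | "n = 3" | "4 \<le> n" using less.prems(1) by linarith
  then show ?case
  proof cases
    case 1
    then show ?thesis using fpf_decomposable_dim2_card3[OF card] less.prems by simp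
  next
    case 2
    then show ?thesis using fpf_decomposable_dim3_card3[OF card] less.prems by simp
  next
    case 3
    define m where "m = n - 2"
    have A: "A \<in> carrier_mat (2 + m) (2 + m)" and n: "n = 2 + m"
      using less.prems 3 by (auto simp: m_def)
    have "fpf_decomposable (2 + m) (four_block_mat (mat 2 2 (\<lambda>(i,j). A $$ (i,j)))
        (mat 2 m (\<lambda>(i,j). A $$ (i, 2 + j))) (mat m 2 (\<lambda>(i,j). A $$ (2 + i, j)))
        (mat m m (\<lambda>(i,j). A $$ (2 + i, 2 + j))))"
      using fpf_decomposable_dim2_card3[OF card] less.IH 3 n
      by (intro fpf_decomposable_four_block_diag) auto
    then show ?thesis using four_block_mat_split[OF A] n by simp
  qed
qed

section \<open>The field with two elements\<close>

lemma fpf_decomposable_dim3_card2: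
  assumes "CARD('a::{field,finite}) = 2" and "(A :: 'a mat) \<in> carrier_mat 3 3"
  shows "fpf_decomposable 3 A"
proof -
  let ?wits = "[[[0, 0, 1], [0, 1, 1], [1, 1, 0]], [[0, 1, 0], [1, 0, 1], [1, 0, 0]],
    [[0, 1, 1], [1, 1, 1], [0, 1, 0]], [[1, 0, 1], [1, 0, 0], [0, 1, 1]],
    [[0, 0, 1], [1, 0, 0], [0, 1, 1]], [[0, 1, 0], [1, 1, 1], [1, 1, 0]],
    [[0, 1, 0], [0, 0, 1], [1, 1, 0]], [[1, 0, 1], [1, 1, 0], [1, 1, 1]],
    [[0, 0, 1], [0, 1, 1], [1, 1, 1]], [[0, 0, 1], [1, 0, 0], [1, 1, 0 :: int]]]"
  let ?all = "List.n_lists 3 (List.n_lists 3 [0, 1 :: int])"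
  have "\<forall>yss \<in> set ?wits. square_list 3 yss \<and> \<not> int 2 dvd det_list yss
      \<and> \<not> int 2 dvd det_list (map2 (map2 (-)) yss (id_list 3))"
    by (simp add: square_list_def id_list_def upt_rec det_list_3 del: det_list.simps)
  moreover have "list_all (\<lambda>xss. list_ex (\<lambda>yss. \<not> int 2 dvd det_list (map2 (map2 (-)) xss yss)) ?wits) ?all"
    apply (simp only: numeral_3_eq_3 n_lists.simps list.map concat.simps append.simps list.pred_inject)
    by (simp add: det_list_3 del: det_list.simps)
  moreover have "set [0, 1] = {0..<int 2}" by auto
  ultimately show ?thesis
    using fpf_decomposable_prime_card_cover[OF assms(1) two_is_prime_nat _ assms(2)] by blast
qed

lemma fpf_decomposable_dim2_card2:
  assumes card: "CARD('a::{field,finite}) = 2" and A: "(A :: 'a mat) \<in> carrier_mat 2 2"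
    and crit: "A $$ (0,0) \<noteq> A $$ (1,1) \<or> (A $$ (0,1) = 0 \<and> A $$ (1,0) = 0)"
  shows "fpf_decomposable 2 A"
proof -
  let ?crit = "\<lambda>xss :: int list list. xss ! 0 ! 0 \<noteq> xss ! 1 ! 1 \<or> (xss ! 0 ! 1 = 0 \<and> xss ! 1 ! 0 = 0)"
  let ?wits = "[[[0, 1], [1, 1]], [[1, 1], [1, 0 :: int]]]"
  let ?all = "filter ?crit (List.n_lists 2 (List.n_lists 2 [0, 1 :: int]))"
  have "set [0, 1] = {0..<int 2}" by auto
  then obtain xss where xss: "xss \<in> set (List.n_lists 2 (List.n_lists 2 [0, 1]))"
    and A_eq: "A = map_mat of_int (mat_of_rows_list 2 xss)"
    using prime_card_mat_of_int[OF card two_is_prime_nat _ A] by blast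
  have entry: "A $$ (i,j) = of_int (xss ! i ! j)" "xss ! i ! j \<in> {0, 1}" if "i < 2" "j < 2" for i j
  proof -
    have "length xss = 2" and "set xss \<subseteq> set (List.n_lists 2 [0, 1])"
      using xss by (simp_all only: set_n_lists mem_Collect_eq)
    then have "xss ! i \<in> set (List.n_lists 2 [0, 1])" using that by (metis nth_mem subsetD)
    then have "length (xss ! i) = 2" and "set (xss ! i) \<subseteq> {0, 1}" by (simp_all add: set_n_lists)
    then show "xss ! i ! j \<in> {0, 1}" using that by (metis nth_mem subsetD)
    show "A $$ (i,j) = of_int (xss ! i ! j)"
      using xss that by (simp add: A_eq mat_of_rows_list_def set_n_lists)
  qed
  have "?crit xss"
    using crit entry[of 0 0] entry[of 1 1] entry[of 0 1] entry[of 1 0] by auto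
  then have xss_all: "xss \<in> set ?all" using xss by simp
  have wits: "\<forall>yss \<in> set ?wits. square_list 2 yss \<and> \<not> int 2 dvd det_list yss
      \<and> \<not> int 2 dvd det_list (map2 (map2 (-)) yss (id_list 2))"
    by (simp add: square_list_def id_list_def upt_rec det_list_2 del: det_list.simps)
  have cover: "list_all (\<lambda>xss. list_ex (\<lambda>yss. \<not> int 2 dvd det_list (map2 (map2 (-)) xss yss)) ?wits) ?all"
    apply (simp only: numeral_2_eq_2 n_lists.simps list.map concat.simps append.simps)
    by (simp add: det_list_2 del: det_list.simps)
  show ?thesis
    unfolding A_eq using fpf_decomposable_of_int_cover[OF card two_is_prime_nat wits cover xss_all]
    by (simp add: square_list_n_lists[OF xss])
qed

text \<open>A nonzero entry of R lets the Schur complement G - R W take any value in one diagonal entry,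
  so its diagonal entries can be made distinct.\<close>

lemma fpf_decomposable_first_pair_row_card2:
  fixes A :: "'a::{field,finite} mat"
  assumes card: "CARD('a) = 2" and A: "A \<in> carrier_mat (2 + m) (2 + m)"
    and H: "fpf_decomposable m (mat m m (\<lambda>(i,j). A $$ (2 + i, 2 + j)))"
    and ij: "i < 2" "j < m" "A $$ (i, 2 + j) \<noteq> 0"
  shows "fpf_decomposable (2 + m) A"
proof -
  let ?G = "mat 2 2 (\<lambda>(i,j). A $$ (i,j))" and ?R = "mat 2 m (\<lambda>(i,j). A $$ (i, 2 + j))"
  define i' where "i' = 1 - i"
  define t where "t = (A $$ (i,i) - A $$ (i',i') - 1) / A $$ (i, 2 + j)"
  define W where "W = mat m 2 (\<lambda>(r,c). if r = j then (\<lambda>c. if c = i then t else 0) c else 0)"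
  have R: "?R \<in> carrier_mat 2 m" and W: "W \<in> carrier_mat m 2" by (simp_all add: W_def)
  have RW: "?R * W = mat 2 2 (\<lambda>(a,c). ?R $$ (a,j) * (if c = i then t else 0))"
    unfolding W_def by (rule mult_mat_single_row[OF R ij(2)])
  have diag: "(?G - ?R * W) $$ (a,a) = A $$ (a,a) - A $$ (a, 2 + j) * (if a = i then t else 0)"
    if "a < 2" for a
    using that ij unfolding RW by simp
  have "i' \<noteq> i" using ij(1) unfolding i'_def by arith
  have "i' < 2" by (simp add: i'_def)
  have "(?G - ?R * W) $$ (i,i) = A $$ (i',i') + 1" and "(?G - ?R * W) $$ (i',i') = A $$ (i',i')"
    using ij diag[of i] diag[of i'] \<open>i' \<noteq> i\<close> \<open>i' < 2\<close> by (simp_all add: t_def)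
  then have "(?G - ?R * W) $$ (i,i) \<noteq> (?G - ?R * W) $$ (i',i')" by simp
  then have "(?G - ?R * W) $$ (0,0) \<noteq> (?G - ?R * W) $$ (1,1)"
    using ij(1) by (cases i) (auto simp: i'_def)
  moreover have "?G - ?R * W \<in> carrier_mat 2 2"
    using R W by (intro minus_carrier_mat mult_carrier_mat)
  ultimately have "fpf_decomposable 2 (?G - ?R * W)"
    by (intro fpf_decomposable_dim2_card2[OF card]) auto
  then have "fpf_decomposable (2 + m) (four_block_mat ?G ?R (mat m 2 (\<lambda>(i,j). A $$ (2 + i, j)))
      (mat m m (\<lambda>(i,j). A $$ (2 + i, 2 + j))))"
    by (intro fpf_decomposable_four_block[OF _ R _ _ W _ H]) auto
  then show ?thesis by (subst four_block_mat_split[OF A])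
qed

lemma fpf_decomposable_first_pair_card2:
  fixes A :: "'a::{field,finite} mat"
  assumes card: "CARD('a) = 2" and A: "A \<in> carrier_mat (2 + m) (2 + m)"
    and H: "fpf_decomposable m (mat m m (\<lambda>(i,j). A $$ (2 + i, 2 + j)))"
    and pair: "fpf_decomposable 2 (mat 2 2 (\<lambda>(i,j). A $$ (i,j)))
      \<or> (\<exists>i<2. \<exists>j<m. A $$ (i, 2 + j) \<noteq> 0 \<or> A $$ (2 + j, i) \<noteq> 0)"
  shows "fpf_decomposable (2 + m) A"
proof -
  from pair consider (corner) "fpf_decomposable 2 (mat 2 2 (\<lambda>(i,j). A $$ (i,j)))"
    | (row) i j where "i < 2" "j < m" "A $$ (i, 2 + j) \<noteq> 0"
    | (col) i j where "i < 2" "j < m" "A $$ (2 + j, i) \<noteq> 0"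
    by blast
  then show ?thesis
  proof cases
    case corner
    then have "fpf_decomposable (2 + m) (four_block_mat (mat 2 2 (\<lambda>(i,j). A $$ (i,j)))
        (mat 2 m (\<lambda>(i,j). A $$ (i, 2 + j))) (mat m 2 (\<lambda>(i,j). A $$ (2 + i, j)))
        (mat m m (\<lambda>(i,j). A $$ (2 + i, 2 + j))))"
      by (intro fpf_decomposable_four_block_diag[OF _ _ _ _ _ H]) auto
    then show ?thesis by (subst four_block_mat_split[OF A])
  next
    case row
    then show ?thesis by (rule fpf_decomposable_first_pair_row_card2[OF card A H])
  next
    case (col i j)
    have AT: "transpose_mat A \<in> carrier_mat (2 + m) (2 + m)" using A by simp
    have "mat m m (\<lambda>(i,j). transpose_mat A $$ (2 + i, 2 + j))
        = transpose_mat (mat m m (\<lambda>(i,j). A $$ (2 + i, 2 + j)))"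
      using A by (intro eq_matI) auto
    then have "fpf_decomposable m (mat m m (\<lambda>(i,j). transpose_mat A $$ (2 + i, 2 + j)))"
      using fpf_decomposable_transpose[OF _ H] by simp
    moreover have "transpose_mat A $$ (i, 2 + j) \<noteq> 0" using col A by simp
    ultimately have "fpf_decomposable (2 + m) (transpose_mat A)"
      using fpf_decomposable_first_pair_row_card2[OF card AT _ col(1,2)] by blast
    then show ?thesis using fpf_decomposable_transpose[OF AT] by simp
  qed
qed

text \<open>If the leading pair is not linked to the rest, swapping the indices 1 and 2 makes the
  leading 2 by 2 block diagonal.\<close>

lemma fpf_decomposable_card2_leading_pair:
  fixes A :: "'a::{field,finite} mat"
  assumes card: "CARD('a) = 2" and A: "A \<in> carrier_mat (2 + m) (2 + m)" and m: "1 \<le> m"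
    and H: "fpf_decomposable m (mat m m (\<lambda>(i,j). A $$ (2 + i, 2 + j)))"
    and H': "\<forall>i<2. \<forall>j<m. A $$ (i, 2 + j) = 0 \<and> A $$ (2 + j, i) = 0 \<Longrightarrow>
      fpf_decomposable m (mat m m (\<lambda>(i,j). swap_cols_rows 1 2 A $$ (2 + i, 2 + j)))"
  shows "fpf_decomposable (2 + m) A"
proof (cases "\<exists>i<2. \<exists>j<m. A $$ (i, 2 + j) \<noteq> 0 \<or> A $$ (2 + j, i) \<noteq> 0")
  case True
  then show ?thesis using fpf_decomposable_first_pair_card2[OF card A H] by blast
next
  case False
  let ?A = "swap_cols_rows 1 2 A"
  have A': "?A \<in> carrier_mat (2 + m) (2 + m)" using A by simp
  from False have zero: "A $$ (i, 2 + j) = 0" "A $$ (2 + j, i) = 0" if "i < 2" "j < m" for i j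
    using that by auto
  have "A $$ (0, 2) = 0" and "A $$ (2, 0) = 0" using zero[of 0 0] m by simp_all
  then have "fpf_decomposable 2 (mat 2 2 (\<lambda>(i,j). ?A $$ (i,j)))"
    using A m by (intro fpf_decomposable_dim2_card2[OF card]) auto
  moreover have "fpf_decomposable m (mat m m (\<lambda>(i,j). ?A $$ (2 + i, 2 + j)))"
    by (rule H') (use False in blast)
  ultimately have dec: "fpf_decomposable (2 + m) ?A"
    by (intro fpf_decomposable_first_pair_card2[OF card A']) simp_all
  have "similar_mat A ?A"
    using m by (intro swap_cols_rows_similar[OF A, THEN similar_mat_sym]) auto
  then show ?thesis using A' dec by (rule fpf_decomposable_similar)
qed

lemma similar_mat_corner_diagonal_or_distinct:
  fixes A :: "'a::field mat"
  assumes A: "A \<in> carrier_mat 4 4"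
  obtains A' where "similar_mat A A'" and "A' \<in> carrier_mat 4 4"
    and "A' $$ (2,2) \<noteq> A' $$ (3,3) \<or> (A' $$ (2,3) = 0 \<and> A' $$ (3,2) = 0)"
proof -
  consider (corner) "A $$ (2,2) \<noteq> A $$ (3,3) \<or> (A $$ (2,3) = 0 \<and> A $$ (3,2) = 0)"
    | (swap) "A $$ (2,2) = A $$ (3,3)" "A $$ (0,0) \<noteq> A $$ (2,2)"
    | (shear) k l where "{k, l} = {2, 3 :: nat}" "A $$ (l,k) \<noteq> 0" "A $$ (0,0) = A $$ (k,k)"
    by (metis insert_commute)
  then show ?thesis
  proof cases
    case corner
    then show ?thesis using A that similar_mat_refl by blast
  next
    case swap
    let ?A = "swap_cols_rows 0 2 A"
    have "similar_mat A ?A" by (intro swap_cols_rows_similar[OF A, THEN similar_mat_sym]) auto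
    moreover have "?A $$ (2,2) \<noteq> ?A $$ (3,3)" using A swap by simp
    ultimately show ?thesis using A that by simp
  next
    case shear
    have kl: "k < 4" "l < 4" "k \<noteq> l" "0 \<noteq> k" "0 \<noteq> l" using shear(1) by (auto simp: doubleton_eq_iff)
    let ?A1 = "add_col_sub_row 1 k l A"
    let ?A2 = "swap_cols_rows 0 l ?A1"
    have A1: "?A1 \<in> carrier_mat 4 4" using A by simp
    have "?A1 $$ (k,k) = A $$ (k,k) - A $$ (l,k)" and "?A1 $$ (0,0) = A $$ (0,0)"
      using A kl by simp_all
    then have "?A2 $$ (k,k) \<noteq> ?A2 $$ (l,l)" using A A1 kl shear(2,3) by simp
    then have "?A2 $$ (2,2) \<noteq> ?A2 $$ (3,3)" using shear(1) by (auto simp: doubleton_eq_iff)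
    moreover have "similar_mat A ?A2"
    proof (rule similar_mat_trans)
      show "similar_mat A ?A1"
        by (rule add_col_sub_row_similar[OF A kl(1,2,3), THEN similar_mat_sym])
      show "similar_mat ?A1 ?A2"
        using kl by (intro swap_cols_rows_similar[OF A1, THEN similar_mat_sym]) auto
    qed
    ultimately show ?thesis using A1 that by simp
  qed
qed

lemma fpf_decomposable_dim4_card2:
  assumes card: "CARD('a::{field,finite}) = 2" and A: "(A :: 'a mat) \<in> carrier_mat 4 4"
  shows "fpf_decomposable 4 A"
proof -
  obtain A' where sim: "similar_mat A A'" and A': "A' \<in> carrier_mat (2 + 2) (2 + 2)"
    and corner: "A' $$ (2,2) \<noteq> A' $$ (3,3) \<or> (A' $$ (2,3) = 0 \<and> A' $$ (3,2) = 0)"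
    using similar_mat_corner_diagonal_or_distinct[OF A] by auto
  have "fpf_decomposable (2 + 2) A'"
  proof (rule fpf_decomposable_card2_leading_pair[OF card A'])
    show "fpf_decomposable 2 (mat 2 2 (\<lambda>(i,j). A' $$ (2 + i, 2 + j)))"
      using corner by (intro fpf_decomposable_dim2_card2[OF card]) (auto simp: numeral_eq_Suc)
    assume off: "\<forall>i<2. \<forall>j<2. A' $$ (i, 2 + j) = 0 \<and> A' $$ (2 + j, i) = 0"
    have "A' $$ (1, 3) = 0" and "A' $$ (3, 1) = 0" using off[rule_format, of 1 1] by simp_all
    then show "fpf_decomposable 2 (mat 2 2 (\<lambda>(i,j). swap_cols_rows 1 2 A' $$ (2 + i, 2 + j)))"
      using A' by (intro fpf_decomposable_dim2_card2[OF card]) (auto simp: numeral_eq_Suc)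
  qed simp
  then show ?thesis using fpf_decomposable_similar[OF sim A'] by simp
qed

theorem fpf_decomposable_card2:
  assumes card: "CARD('a::{field,finite}) = 2"
  shows "3 \<le> n \<Longrightarrow> (A :: 'a mat) \<in> carrier_mat n n \<Longrightarrow> fpf_decomposable n A"
proof (induction n arbitrary: A rule: less_induct)
  case (less n)
  consider "n = 3" | "n = 4" | "5 \<le> n" using less.prems(1) by linarith
  then show ?case
  proof cases
    case 1
    then show ?thesis using fpf_decomposable_dim3_card2[OF card] less.prems by simp
  next
    case 2
    then show ?thesis using fpf_decomposable_dim4_card2[OF card] less.prems by simp
  next
    case 3
    define m where "m = n - 2"
    have A: "A \<in> carrier_mat (2 + m) (2 + m)" and n: "n = 2 + m" and m: "3 \<le> m"
      using less.prems 3 by (auto simp: m_def)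
    have IH: "fpf_decomposable m H" if "H \<in> carrier_mat m m" for H :: "'a mat"
      using less.IH[of m H] that m n by simp
    have "fpf_decomposable (2 + m) A"
      using m by (intro fpf_decomposable_card2_leading_pair[OF card A] IH) auto
    then show ?thesis using n by simp
  qed
qed

theorem fpf_decomposable_finite_field:
  fixes A :: "'a::{field,finite} mat"
  assumes A: "A \<in> carrier_mat n n" and n: "1 \<le> n"
    and "\<not> (n = 1 \<and> CARD('a) = 2)" and "\<not> (n = 1 \<and> CARD('a) = 3)" and "\<not> (n = 2 \<and> CARD('a) = 2)"
  shows "fpf_decomposable n A"
proof -
  have "card {0 :: 'a, 1} \<le> CARD('a)" by (rule card_mono) auto
  then consider "CARD('a) = 2" | "CARD('a) = 3" | "4 \<le> CARD('a)" by fastforce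
  then show ?thesis
  proof cases
    case 1
    then show ?thesis using fpf_decomposable_card2[OF 1 _ A] assms by linarith
  next
    case 2
    then show ?thesis using fpf_decomposable_card3[OF 2 _ A] assms by linarith
  next
    case 3
    then show ?thesis using fpf_decomposable_card_ge4[OF 3 A] by blast
  qed
qed

section \<open>Matrices indexed by a finite type\<close>

lemma fixed_point_free_if_invertible_minus_one:
  fixes M :: "'a::field^'n^'n"
  assumes "invertible (M - Finite_Cartesian_Product.mat 1)"
  shows "fixed_point_free M"
  unfolding fixed_point_free_def
proof (intro allI impI)
  fix v :: "'a^'n" assume "v v* M = v"
  then have "v v* (M - Finite_Cartesian_Product.mat 1) = 0" by (simp add: vector_matrix_mult_diff_rdistrib)
  moreover obtain K where "(M - Finite_Cartesian_Product.mat 1) ** K = Finite_Cartesian_Product.mat 1"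
    using assms invertible_right_inverse by blast
  ultimately show "v = 0" by (metis vector_matrix_mul_assoc vector_matrix_mul_rid vector_matrix_mult_0)
qed

context
  fixes h :: "'n::finite \<Rightarrow> nat"
  assumes h: "bij_betw h UNIV {..<CARD('n)}"
begin

definition cart_of_mat :: "'a mat \<Rightarrow> 'a^'n^'n" where
  "cart_of_mat M = (\<chi> i j. M $$ (h i, h j))"

definition mat_of_cart :: "'a^'n^'n \<Rightarrow> 'a mat" where
  "mat_of_cart A = mat CARD('n) CARD('n) (\<lambda>(i,j). A $ inv_into UNIV h i $ inv_into UNIV h j)"

lemma mat_of_cart_carrier: "mat_of_cart A \<in> carrier_mat CARD('n) CARD('n)"
  by (simp add: mat_of_cart_def)

lemma bij_index_less_card: "h i < CARD('n)"
  using h by (auto simp: bij_betw_def)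

lemma bij_index_eq_iff: "h i = h j \<longleftrightarrow> i = j"
  using h by (auto simp: bij_betw_def inj_eq)

lemma cart_of_mat_of_cart: "cart_of_mat (mat_of_cart A) = A"
proof -
  have "inv_into UNIV h (h i) = i" for i
    using h by (simp add: bij_betw_def)
  then show ?thesis
    by (simp add: cart_of_mat_def mat_of_cart_def bij_index_less_card Finite_Cartesian_Product.vec_eq_iff)
qed

lemma cart_of_mat_minus:
  "M \<in> carrier_mat CARD('n) CARD('n) \<Longrightarrow> N \<in> carrier_mat CARD('n) CARD('n)
    \<Longrightarrow> cart_of_mat (M - N) = cart_of_mat M - (cart_of_mat N :: 'a::ab_group_add^'n^'n)"
  by (simp add: cart_of_mat_def Finite_Cartesian_Product.vec_eq_iff bij_index_less_card)

lemma cart_of_mat_one: "cart_of_mat (1\<^sub>m CARD('n)) = (Finite_Cartesian_Product.mat 1 :: 'a::{zero,one}^'n^'n)"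
  by (simp add: cart_of_mat_def Finite_Cartesian_Product.mat_def Finite_Cartesian_Product.vec_eq_iff
      bij_index_less_card bij_index_eq_iff)

lemma cart_of_mat_mult:
  fixes M N :: "'a::semiring_1 mat"
  assumes "M \<in> carrier_mat CARD('n) CARD('n)" and "N \<in> carrier_mat CARD('n) CARD('n)"
  shows "cart_of_mat (M * N) = cart_of_mat M ** cart_of_mat N"
proof -
  have "(\<Sum>k<CARD('n). M $$ (h i, k) * N $$ (k, h j)) = (\<Sum>k\<in>UNIV. M $$ (h i, h k) * N $$ (h k, h j))"
    for i j by (rule sum.reindex_bij_betw[OF h, symmetric])
  then show ?thesis
    using assms by (simp add: cart_of_mat_def matrix_matrix_mult_def Finite_Cartesian_Product.vec_eq_iff
        scalar_prod_def bij_index_less_card lessThan_atLeast0)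
qed

lemma invertible_cart_of_mat:
  assumes M: "M \<in> carrier_mat CARD('n) CARD('n)" and "det M \<noteq> (0 :: 'a::field)"
  shows "invertible (cart_of_mat M)"
proof -
  obtain M' where M': "M' \<in> carrier_mat CARD('n) CARD('n)" and "M * M' = 1\<^sub>m CARD('n)"
    using det_non_zero_imp_unit[OF assms, unfolded Units_def, of "()"] by (auto simp: ring_mat_def)
  then have "cart_of_mat M ** cart_of_mat M' = Finite_Cartesian_Product.mat 1"
    by (simp add: cart_of_mat_mult[OF M M', symmetric] cart_of_mat_one)
  then show ?thesis using invertible_right_inverse by blast
qed

lemma fpf_factorization:
  assumes "invertible A" and "fpf_decomposable CARD('n) (mat_of_cart A :: 'a::field mat)"
  shows "\<exists>B C :: 'a^'n^'n. invertible B \<and> invertible C \<and>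
    fixed_point_free B \<and> fixed_point_free C \<and> A = B ** C"
proof -
  let ?N = "CARD('n)" and ?I = "Finite_Cartesian_Product.mat 1 :: 'a^'n^'n"
  obtain B' where B': "B' \<in> carrier_mat ?N ?N" "det B' \<noteq> 0" "det (B' - 1\<^sub>m ?N) \<noteq> 0"
    "det (mat_of_cart A - B') \<noteq> 0"
    using assms(2) unfolding fpf_decomposable_def by blast
  define B where "B = cart_of_mat B'"
  have B: "invertible B" using invertible_cart_of_mat[OF B'(1,2)] by (simp add: B_def)
  then obtain B_inv where B_inv: "B ** B_inv = ?I" "B_inv ** B = ?I"
    unfolding invertible_def by blast
  define C where "C = B_inv ** A"
  have "invertible (B - ?I)" and "invertible (A - B)"
    using invertible_cart_of_mat[OF _ B'(3)] invertible_cart_of_mat[OF _ B'(4)] B'(1)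
    by (simp_all add: B_def cart_of_mat_minus cart_of_mat_one cart_of_mat_of_cart
        minus_carrier_mat mat_of_cart_carrier)
  moreover have "C - ?I = B_inv ** (A - B)"
    using B_inv matrix_add_ldistrib[of B_inv "A - B" B] by (simp add: C_def algebra_simps)
  moreover have "invertible B_inv" using B_inv unfolding invertible_def by blast
  moreover have "A = B ** C" by (simp add: C_def matrix_mul_assoc B_inv)
  ultimately show ?thesis
    using B assms(1) by (metis C_def invertible_mult fixed_point_free_if_invertible_minus_one)
qed

end

theorem proposition3p2:
  fixes A :: "('a::{field,finite}) ^'n::finite^'n"
  assumes "\<not> (CARD('n) = 1 \<and> CARD('a) = 2)"
    and "\<not> (CARD('n) = 1 \<and> CARD('a) = 3)"
    and "\<not> (CARD('n) = 2 \<and> CARD('a) = 2)"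
    and "invertible A"
  shows "\<exists>B C :: 'a^'n^'n. invertible B \<and> invertible C \<and>
           fixed_point_free B \<and> fixed_point_free C \<and> A = B ** C"
proof -
  obtain h :: "'n \<Rightarrow> nat" where h: "bij_betw h UNIV {..<CARD('n)}"
    using ex_bij_betw_finite_nat[of "UNIV :: 'n set"] by (auto simp: lessThan_atLeast0)
  have "fpf_decomposable CARD('n) (mat_of_cart h A)"
    using assms(1-3) mat_of_cart_carrier[OF h]
    by (intro fpf_decomposable_finite_field) (auto simp: Suc_le_eq)
  then show ?thesis using fpf_factorization[OF h assms(4)] by blast
qed

end
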